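(* Let $v$ be a $C^2$ vector field on an open set $\Omega\subset\mathbb{R}^3$ with $1\mp|v|^2>0$ on $\Omega$ (for a fixed choice of sign), satisfying $\nabla\times\frac{v}{\sqrt{1\mp|v|^2}}=0$ on $\Omega$. Then on $\Omega$: (i) $(1\mp|v|^2)\,\nabla\times v\pm\big[\tfrac12\nabla|v|^2\big]\times v=0$; (ii) $v\cdot(\nabla\times v)=0$; (iii) $\nabla|v|^2\cdot(\nabla\times v)=0$; (iv) $\nabla\times v=\pm\,v\times(v\cdot\nabla)v$.
   Context: This is the curl equation of the "$v$ problem": for a solution $u$ of $\pm\nabla\cdot\frac{\nabla u}{\sqrt{1\pm|\nabla u|^2}}=3H$ on $\mathbb{R}^3$, $v:=\pm\frac{\nabla u}{\sqrt{1\pm|\nabla u|^2}}$ satisfies $\nabla\cdot v=3H$ and $\nabla\times\frac{v}{\sqrt{1\mp|v|^2}}=0$. The upper sign corresponds to the Euclidean, the lower to the Minkowskian setting. *)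

theory Defs
  imports "HOL-Analysis.Analysis"
begin

definition pdiff :: "3 \<Rightarrow> (real^3 \<Rightarrow> 'b::real_normed_vector) \<Rightarrow> real^3 \<Rightarrow> 'b" where
  "pdiff i f x = frechet_derivative f (at x) (axis i 1)"

definition C2_on :: "(real^3) set \<Rightarrow> (real^3 \<Rightarrow> 'b::real_normed_vector) \<Rightarrow> bool" where
  "C2_on \<Omega> f \<longleftrightarrow> f differentiable_on \<Omega>
     \<and> (\<forall>i. (pdiff i f) differentiable_on \<Omega>)
     \<and> (\<forall>i j. continuous_on \<Omega> (pdiff j (pdiff i f)))"

definition curl :: "(real^3 \<Rightarrow> real^3) \<Rightarrow> real^3 \<Rightarrow> real^3" where
  "curl F x = vector [pdiff 2 (\<lambda>y. F y $ 3) x - pdiff 3 (\<lambda>y. F y $ 2) x,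
                      pdiff 3 (\<lambda>y. F y $ 1) x - pdiff 1 (\<lambda>y. F y $ 3) x,
                      pdiff 1 (\<lambda>y. F y $ 2) x - pdiff 2 (\<lambda>y. F y $ 1) x]"

definition grad :: "(real^3 \<Rightarrow> real) \<Rightarrow> real^3 \<Rightarrow> real^3" where
  "grad g x = (\<chi> i. pdiff i g x)"

definition dir_deriv :: "real^3 \<Rightarrow> (real^3 \<Rightarrow> real^3) \<Rightarrow> real^3 \<Rightarrow> real^3" where
  "dir_deriv w F x = (\<Sum>i\<in>UNIV. (w $ i) *\<^sub>R pdiff i F x)"

end

theory Submission
  imports Defs
begin

text \<open>Write \<open>g = 1 - s |v|\<^sup>2\<close>. The product rule for the curl together with
  \<open>\<nabla>(1/\<surd>g) = (s/2) g\<^sup>-\<^sup>3\<^sup>/\<^sup>2 \<nabla>|v|\<^sup>2\<close> gives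
  \<open>curl (v/\<surd>g) = g\<^sup>-\<^sup>3\<^sup>/\<^sup>2 (g curl v + s (\<nabla>|v|\<^sup>2/2) \<times> v)\<close>, whence (i).
  Taking the inner product of (i) with \<open>v\<close> and with \<open>\<nabla>|v|\<^sup>2\<close> kills the cross product
  and gives (ii) and (iii). For (iv), insert the classical identity
  \<open>\<nabla>|v|\<^sup>2/2 = (v\<cdot>\<nabla>)v + v \<times> curl v\<close> into (i) and use
  \<open>(v \<times> c) \<times> v = |v|\<^sup>2 c - (v\<cdot>c) v = |v|\<^sup>2 c\<close> by (ii): the \<open>|v|\<^sup>2\<close> terms cancel.\<close>

lemma pdiff_eq_derivative: "(f has_derivative f') (at x) \<Longrightarrow> pdiff i f x = f' (axis i 1)"
  unfolding pdiff_def using frechet_derivative_at[of f f' x] by simp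

lemma curl_eq_derivative:
  assumes "(F has_derivative D) (at x)"
  shows "curl F x = vector [D (axis 2 1) $ 3 - D (axis 3 1) $ 2,
                            D (axis 3 1) $ 1 - D (axis 1 1) $ 3,
                            D (axis 1 1) $ 2 - D (axis 2 1) $ 1]"
  using pdiff_eq_derivative[OF bounded_linear.has_derivative[OF bounded_linear_vec_nth assms]]
  by (simp add: curl_def)

lemma grad_eq_derivative: "(f has_derivative f') (at x) \<Longrightarrow> grad f x = (\<chi> i. f' (axis i 1))"
  by (simp add: grad_def pdiff_eq_derivative)

lemma curl_scaleR:
  assumes "\<phi> differentiable (at x)" and "F differentiable (at x)"
  shows "curl (\<lambda>y. \<phi> y *\<^sub>R F y) x = \<phi> x *\<^sub>R curl F x + cross3 (grad \<phi> x) (F x)"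
proof -
  obtain \<phi>' D where \<phi>': "(\<phi> has_derivative \<phi>') (at x)" and D: "(F has_derivative D) (at x)"
    using assms by (auto simp: differentiable_def)
  have "((\<lambda>y. \<phi> y *\<^sub>R F y) has_derivative (\<lambda>h. \<phi> x *\<^sub>R D h + \<phi>' h *\<^sub>R F x)) (at x)"
    using has_derivative_scaleR[OF \<phi>' D] by simp
  from curl_eq_derivative[OF this] show ?thesis
    by (simp add: curl_eq_derivative[OF D] grad_eq_derivative[OF \<phi>'] vec_eq_iff forall_3 cross3_def
        algebra_simps)
qed

lemma grad_norm_power2:
  assumes "F differentiable (at x)"
  shows "grad (\<lambda>y. (norm (F y))\<^sup>2) x = 2 *\<^sub>R (dir_deriv (F x) F x + cross3 (F x) (curl F x))"
proof -
  obtain D where D: "(F has_derivative D) (at x)"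
    using assms by (auto simp: differentiable_def)
  have "((\<lambda>y. F y \<bullet> F y) has_derivative (\<lambda>h. F x \<bullet> D h + D h \<bullet> F x)) (at x)"
    by (rule has_derivative_inner[OF D D])
  then have N: "((\<lambda>y. (norm (F y))\<^sup>2) has_derivative (\<lambda>h. 2 * (F x \<bullet> D h))) (at x)"
    by (simp add: power2_norm_eq_inner inner_commute)
  show ?thesis
    by (simp add: grad_eq_derivative[OF N] dir_deriv_def pdiff_eq_derivative[OF D]
        curl_eq_derivative[OF D] vec_eq_iff forall_3 cross3_def inner_vec_def sum_3 algebra_simps)
qed

lemma grad_compose:
  assumes "DERIV h (f x) :> h'" and "f differentiable (at x)"
  shows "grad (\<lambda>y. h (f y)) x = h' *\<^sub>R grad f x"
proof -
  obtain f' where f': "(f has_derivative f') (at x)"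
    using assms(2) by (auto simp: differentiable_def)
  have "((\<lambda>y. h (f y)) has_derivative (\<lambda>v. f' v * h')) (at x)"
    using DERIV_compose_FDERIV[OF assms(1) f'] by (simp add: mult.commute)
  from grad_eq_derivative[OF this] show ?thesis
    by (simp add: grad_eq_derivative[OF f'] vec_eq_iff)
qed

lemma curl_normalized_field:
  assumes "F differentiable (at x)" and g: "g = 1 - s * (norm (F x))\<^sup>2" "g > 0"
  shows "curl (\<lambda>y. (1 / sqrt (1 - s * (norm (F y))\<^sup>2)) *\<^sub>R F y) x
    = (1 / (g * sqrt g)) *\<^sub>R
        (g *\<^sub>R curl F x + s *\<^sub>R cross3 ((1/2) *\<^sub>R grad (\<lambda>y. (norm (F y))\<^sup>2) x) (F x))"
proof -
  have N: "(\<lambda>y. (norm (F y))\<^sup>2) differentiable (at x)"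
    using assms(1) by (simp add: power2_norm_eq_inner)
  then obtain N' where N': "((\<lambda>y. (norm (F y))\<^sup>2) has_derivative N') (at x)"
    by (auto simp: differentiable_def)
  have "DERIV (\<lambda>t. 1 / sqrt (1 - s * t)) t :> s / (2 * g * sqrt g)" if "g = 1 - s * t" for t
    using that g(2) by (auto intro!: derivative_eq_intros simp: divide_simps)
  then have h: "DERIV (\<lambda>t. 1 / sqrt (1 - s * t)) ((norm (F x))\<^sup>2) :> s / (2 * g * sqrt g)"
    using g(1) .
  have "(\<lambda>y. 1 / sqrt (1 - s * (norm (F y))\<^sup>2)) differentiable (at x)"
    using DERIV_compose_FDERIV[OF h N'] by (auto simp: differentiable_def)
  then show ?thesis
    using g by (simp add: curl_scaleR[OF _ assms(1)] grad_compose[OF h N] cross_mult_left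
        scaleR_add_right field_simps)
qed

lemma cross3_cross3_self: "cross3 (cross3 a c) a = (a \<bullet> a) *\<^sub>R c - (a \<bullet> c) *\<^sub>R a"
  by (simp add: vec_eq_iff forall_3 cross3_def inner_vec_def sum_3 algebra_simps)

lemma inner_eq_0_if_scaleR_add_cross3_eq_0:
  assumes "g *\<^sub>R c + s *\<^sub>R cross3 m a = 0" and "g \<noteq> 0"
  shows "a \<bullet> c = 0" and "m \<bullet> c = 0"
proof -
  have "a \<bullet> (g *\<^sub>R c + s *\<^sub>R cross3 m a) = 0" and "m \<bullet> (g *\<^sub>R c + s *\<^sub>R cross3 m a) = 0"
    using assms(1) by simp_all
  then show "a \<bullet> c = 0" and "m \<bullet> c = 0"
    using assms(2) by (simp_all add: inner_add_right dot_cross_self)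
qed

lemma curl_eq_cross_dir_deriv:
  assumes "F differentiable (at x)"
    and "(1 - s * (norm (F x))\<^sup>2) *\<^sub>R curl F x
           + s *\<^sub>R cross3 ((1/2) *\<^sub>R grad (\<lambda>y. (norm (F y))\<^sup>2) x) (F x) = 0"
    and "F x \<bullet> curl F x = 0"
  shows "curl F x = s *\<^sub>R cross3 (F x) (dir_deriv (F x) F x)"
proof -
  have "cross3 ((1/2) *\<^sub>R grad (\<lambda>y. (norm (F y))\<^sup>2) x) (F x)
      = cross3 (dir_deriv (F x) F x) (F x) + (F x \<bullet> F x) *\<^sub>R curl F x"
    using assms(3) by (simp add: grad_norm_power2[OF assms(1)] cross_add_left cross3_cross3_self)
  then have "curl F x + s *\<^sub>R cross3 (dir_deriv (F x) F x) (F x) = 0"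
    using assms(2) by (simp add: power2_norm_eq_inner algebra_simps)
  then show ?thesis
    by (metis add.commute add_diff_cancel_left' cross_skew diff_0 scaleR_minus_right)
qed

theorem mainTheorem2:
  fixes v :: "real^3 \<Rightarrow> real^3" and \<Omega> :: "(real^3) set" and s :: real
  assumes "open \<Omega>"
    and "s = 1 \<or> s = -1"
    and "C2_on \<Omega> v"
    and "\<forall>x\<in>\<Omega>. 1 - s * (norm (v x))\<^sup>2 > 0"
    and "\<forall>x\<in>\<Omega>. curl (\<lambda>y. (1 / sqrt (1 - s * (norm (v y))\<^sup>2)) *\<^sub>R v y) x = 0"
  shows "\<forall>x\<in>\<Omega>.
      (1 - s * (norm (v x))\<^sup>2) *\<^sub>R curl v x
        + s *\<^sub>R cross3 ((1/2) *\<^sub>R grad (\<lambda>y. (norm (v y))\<^sup>2) x) (v x) = 0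
    \<and> v x \<bullet> curl v x = 0
    \<and> grad (\<lambda>y. (norm (v y))\<^sup>2) x \<bullet> curl v x = 0
    \<and> curl v x = s *\<^sub>R cross3 (v x) (dir_deriv (v x) v x)"
proof -
  have v: "v differentiable (at x)" if "x \<in> \<Omega>" for x
    using assms(1,3) that by (simp add: C2_on_def differentiable_on_eq_differentiable_at)
  have i: "(1 - s * (norm (v x))\<^sup>2) *\<^sub>R curl v x
      + s *\<^sub>R cross3 ((1/2) *\<^sub>R grad (\<lambda>y. (norm (v y))\<^sup>2) x) (v x) = 0" if "x \<in> \<Omega>" for x
  proof -
    have g: "1 - s * (norm (v x))\<^sup>2 > 0" using assms(4) that by blast
    show ?thesis
      using curl_normalized_field[OF v[OF that] refl g] assms(5) that g by simp
  qed
  have ii_iii: "v x \<bullet> curl v x = 0" "grad (\<lambda>y. (norm (v y))\<^sup>2) x \<bullet> curl v x = 0"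
    if "x \<in> \<Omega>" for x
    using inner_eq_0_if_scaleR_add_cross3_eq_0[OF i[OF that]] assms(4) that by auto
  show ?thesis
    using i ii_iii curl_eq_cross_dir_deriv[OF v i ii_iii(1)] by blast
qed

end
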